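(* Let $\mathbf{k}$ be a commutative ring, $n\ge0$, $\mathcal{A}=\mathbf{k}[S_n]$. If $\beta,\gamma\in\operatorname{Comp}_n$ and $\widetilde{\beta}\preceq_\pi\widetilde{\gamma}$, then $\mathcal{R}_\beta\subseteq\mathcal{R}_\gamma$.
   Context: $S_n$ is the symmetric group on $[n]=\{1,\dots,n\}$, with product $(uw)(i)=u(w(i))$. For $w\in S_n$, $\operatorname{Des}(w)=\{i\in[n-1]: w(i)>w(i+1)\}$. For $I\subseteq[n-1]$, $\mathbf{B}_I=\sum_{w\in S_n,\ \operatorname{Des}(w)\subseteq I} w\in\mathcal{A}$. A composition $\alpha=(\alpha_1,\dots,\alpha_p)$ of $n$ is a finite sequence of positive integers with sum $n$; $\operatorname{Comp}_n$ is the set of these. $\operatorname{Set}(\alpha)=\{\alpha_1,\alpha_1+\alpha_2,\dots,\alpha_1+\cdots+\alpha_{p-1}\}$, and $\mathbf{B}_\alpha:=\mathbf{B}_{\operatorname{Set}(\alpha)}$. The underlying partition $\widetilde\alpha$ is obtained by sorting the parts of $\alpha$ in weakly decreasing order. A composition $\alpha=(\alpha_1,\dots,\alpha_m)$ refines $\beta=(\beta_1,\dots,\beta_p)$ if $\alpha$ can be split into $p$ contiguous subsequences whose $j$-th one sums to $\beta_j$. For partitions $\lambda,\mu$ of $n$, $\lambda\preceq_\pi\mu$ means some rearrangement of the parts of $\lambda$ (as a composition) refines $\mu$; equivalently, writing $\lambda=(\lambda_1,\dots,\lambda_k)$, $\mu=(\mu_1,\dots,\mu_l)$, there is a map $f:[k]\to[l]$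 with $\mu_j=\sum_{i\in f^{-1}(j)}\lambda_i$ for all $j$. For $\beta\in\operatorname{Comp}_n$, $\mathcal{R}_\beta:=\mathbf{B}_\beta\mathcal{A}$. *)

theory Defs
  imports "HOL-Combinatorics.Permutations"
begin

type_synonym perm = "nat \<Rightarrow> nat"

definition Sn :: "nat \<Rightarrow> perm set" where
  "Sn n = {w. w permutes {1..n}}"

definition grp_alg :: "nat \<Rightarrow> (perm \<Rightarrow> 'k::comm_ring_1) set" where
  "grp_alg n = {a. \<forall>w. w \<notin> Sn n \<longrightarrow> a w = 0}"

text \<open>Product in k[S_n], with (uw)(i) = u(w(i)), i.e. uw = u o w.\<close>
definition alg_mult :: "nat \<Rightarrow> (perm \<Rightarrow> 'k::comm_ring_1) \<Rightarrow> (perm \<Rightarrow> 'k) \<Rightarrow> (perm \<Rightarrow> 'k)" where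
  "alg_mult n a b = (\<lambda>w. \<Sum>(u,v)\<in>{(u,v). u \<in> Sn n \<and> v \<in> Sn n \<and> u \<circ> v = w}. a u * b v)"

definition Des :: "nat \<Rightarrow> perm \<Rightarrow> nat set" where
  "Des n w = {i. 1 \<le> i \<and> i \<le> n - 1 \<and> w i > w (Suc i)}"

definition BI :: "nat \<Rightarrow> nat set \<Rightarrow> perm \<Rightarrow> 'k::comm_ring_1" where
  "BI n I = (\<lambda>w. if w \<in> Sn n \<and> Des n w \<subseteq> I then 1 else 0)"

definition is_comp :: "nat \<Rightarrow> nat list \<Rightarrow> bool" where
  "is_comp n \<alpha> \<longleftrightarrow> (\<forall>x\<in>set \<alpha>. 0 < x) \<and> sum_list \<alpha> = n"

definition comp_Set :: "nat list \<Rightarrow> nat set" where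
  "comp_Set \<alpha> = {sum_list (take i \<alpha>) | i. 1 \<le> i \<and> i < length \<alpha>}"

definition B_comp :: "nat \<Rightarrow> nat list \<Rightarrow> perm \<Rightarrow> 'k::comm_ring_1" where
  "B_comp n \<alpha> = BI n (comp_Set \<alpha>)"

definition und_part :: "nat list \<Rightarrow> nat list" where
  "und_part \<alpha> = rev (sort \<alpha>)"

definition part_le :: "nat list \<Rightarrow> nat list \<Rightarrow> bool" where
  "part_le lam mu \<longleftrightarrow> (\<exists>f. (\<forall>i<length lam. f i < length mu) \<and>
      (\<forall>j<length mu. mu ! j = (\<Sum>i\<in>{i. i < length lam \<and> f i = j}. lam ! i)))"

definition R_comp :: "nat \<Rightarrow> nat list \<Rightarrow> (perm \<Rightarrow> 'k::comm_ring_1) set" where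
  "R_comp n \<beta> = {alg_mult n (B_comp n \<beta>) a | a. a \<in> grp_alg n}"

end

theory Submission
  imports Defs
begin

text \<open>\<open>B\<^sub>\<alpha>\<close> is the sum of the permutations that increase on every block of \<open>\<alpha>\<close>. Up to
  reordering the parts, \<open>\<beta>\<close> \<open>\<preceq>\<^sub>\<pi>\<close> \<open>\<gamma>\<close> gives a map \<open>c\<close> merging the blocks of \<open>\<beta>\<close> into those
  of \<open>\<gamma>\<close>, and a permutation \<open>q\<close> sending each block \<open>b\<close> of \<open>\<beta>\<close> into block \<open>c b\<close> of \<open>\<gamma>\<close>.
  Every permutation factors uniquely as a \<open>\<gamma>\<close>-block-increasing one times one preserving the
  \<open>\<gamma>\<close>-blocks (minimal coset representatives of a Young subgroup). Applied to \<open>w q\<^sup>-\<^sup>1\<close>, this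
  writes each \<open>\<beta>\<close>-block-increasing \<open>w\<close> uniquely as \<open>u z\<close> with \<open>u\<close> \<open>\<gamma>\<close>-block-increasing and
  \<open>z\<close> a \<open>\<beta>\<close>-block-increasing permutation with the same \<open>\<gamma>\<close>-block pattern as \<open>q\<close>. Hence
  \<open>B\<^sub>\<beta> = B\<^sub>\<gamma> a\<close> for the sum \<open>a\<close> of these \<open>z\<close>, and \<open>B\<^sub>\<beta> \<A> \<subseteq> B\<^sub>\<gamma> \<A>\<close>.\<close>

section \<open>The group algebra\<close>

lemma finite_Sn: "finite (Sn n)"
  unfolding Sn_def by (rule finite_permutations) simp

lemma Sn_comp: "u \<in> Sn n \<Longrightarrow> v \<in> Sn n \<Longrightarrow> u \<circ> v \<in> Sn n"
  unfolding Sn_def by (auto intro: permutes_compose)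

lemma Sn_inv: "u \<in> Sn n \<Longrightarrow> inv u \<in> Sn n"
  unfolding Sn_def by (auto intro: permutes_inv)

lemma Sn_inv_o:
  assumes "u \<in> Sn n"
  shows "u \<circ> inv u = id" and "inv u \<circ> u = id"
  using assms unfolding Sn_def by (auto intro: permutes_inv_o)

lemma Sn_apply_inv: "u \<in> Sn n \<Longrightarrow> u (inv u x) = x"
  unfolding Sn_def by (simp add: permutes_inverses)

lemma Sn_in_range: "u \<in> Sn n \<Longrightarrow> x \<in> {1..n} \<Longrightarrow> u x \<in> {1..n}"
  unfolding Sn_def by (metis mem_Collect_eq permutes_in_image)

lemma Sn_fixes: "u \<in> Sn n \<Longrightarrow> x \<notin> {1..n} \<Longrightarrow> u x = x"
  unfolding Sn_def by (simp add: permutes_not_in)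

lemma Sn_inj: "u \<in> Sn n \<Longrightarrow> inj u"
  unfolding Sn_def by (simp add: permutes_inj)

lemma Sn_inv_comp: "u \<in> Sn n \<Longrightarrow> v \<in> Sn n \<Longrightarrow> inv (u \<circ> v) = inv v \<circ> inv u"
  unfolding Sn_def by (simp add: o_inv_distrib permutes_bij bij_is_inj bij_is_surj)

lemma alg_mult_outside: "w \<notin> Sn n \<Longrightarrow> alg_mult n a b w = 0"
  unfolding alg_mult_def using Sn_comp by (auto intro!: sum.neutral)

lemma alg_mult_in_grp_alg: "alg_mult n a b \<in> grp_alg n"
  unfolding grp_alg_def using alg_mult_outside by blast

lemma alg_mult_eq_convolution:
  assumes w: "w \<in> Sn n"
  shows "alg_mult n a b w = (\<Sum>u\<in>Sn n. a u * b (inv u \<circ> w))"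
proof -
  have "{(u, v). u \<in> Sn n \<and> v \<in> Sn n \<and> u \<circ> v = w} = (\<lambda>u. (u, inv u \<circ> w)) ` Sn n"
  proof (intro equalityI subsetI)
    fix p assume "p \<in> {(u, v). u \<in> Sn n \<and> v \<in> Sn n \<and> u \<circ> v = w}"
    then obtain u v where "p = (u, v)" "u \<in> Sn n" "w = u \<circ> v" by auto
    moreover from this have "inv u \<circ> w = v" by (simp add: o_assoc Sn_inv_o)
    ultimately show "p \<in> (\<lambda>u. (u, inv u \<circ> w)) ` Sn n" by auto
  next
    fix p assume "p \<in> (\<lambda>u. (u, inv u \<circ> w)) ` Sn n"
    then obtain u where "p = (u, inv u \<circ> w)" "u \<in> Sn n" by auto
    then show "p \<in> {(u, v). u \<in> Sn n \<and> v \<in> Sn n \<and> u \<circ> v = w}"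
      using w by (auto simp: o_assoc Sn_inv_o Sn_comp Sn_inv)
  qed
  then show ?thesis
    unfolding alg_mult_def by (simp add: sum.reindex inj_on_def)
qed

lemma alg_mult_indicators:
  "alg_mult n (\<lambda>u. if P u then 1 else 0) (\<lambda>v. if Q v then 1 else 0) w
     = (of_nat (card {(u, v). u \<in> Sn n \<and> v \<in> Sn n \<and> P u \<and> Q v \<and> u \<circ> v = w}) :: 'k::comm_ring_1)"
proof -
  let ?P = "{(u, v). u \<in> Sn n \<and> v \<in> Sn n \<and> u \<circ> v = w}"
  have fin: "finite ?P"
    by (rule finite_subset[of _ "Sn n \<times> Sn n"]) (auto simp: finite_Sn)
  have "alg_mult n (\<lambda>u. if P u then 1 else 0) (\<lambda>v. if Q v then 1 else 0) w
      = (\<Sum>p\<in>?P. if p \<in> {(u, v). P u \<and> Q v} then 1 else (0::'k))"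
    unfolding alg_mult_def by (rule sum.cong) (auto split: if_splits)
  also have "\<dots> = (\<Sum>p\<in>?P \<inter> {(u, v). P u \<and> Q v}. 1)"
    by (rule sum.inter_restrict[OF fin, symmetric])
  also have "?P \<inter> {(u, v). P u \<and> Q v} = {(u, v). u \<in> Sn n \<and> v \<in> Sn n \<and> P u \<and> Q v \<and> u \<circ> v = w}"
    by auto
  finally show ?thesis by simp
qed

lemma alg_mult_assoc: "alg_mult n (alg_mult n a b) c = alg_mult n a (alg_mult n b c)"
proof
  fix w
  show "alg_mult n (alg_mult n a b) c w = alg_mult n a (alg_mult n b c) w"
  proof (cases "w \<in> Sn n")
    case False
    then show ?thesis by (simp add: alg_mult_outside)
  next
    case w: True
    have shift: "(\<Sum>t\<in>Sn n. b (inv x \<circ> t) * c (inv t \<circ> w)) = alg_mult n b c (inv x \<circ> w)"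
      if x: "x \<in> Sn n" for x
    proof -
      have "(\<Sum>y\<in>Sn n. b y * c (inv y \<circ> (inv x \<circ> w))) = (\<Sum>t\<in>Sn n. b (inv x \<circ> t) * c (inv t \<circ> w))"
        by (rule sum.reindex_bij_witness[of _ "\<lambda>t. inv x \<circ> t" "\<lambda>y. x \<circ> y"])
           (use x in \<open>auto simp: o_assoc Sn_inv_o Sn_comp Sn_inv Sn_inv_comp\<close>)
      then show ?thesis
        using x w by (simp add: alg_mult_eq_convolution Sn_comp Sn_inv)
    qed
    have "alg_mult n (alg_mult n a b) c w
        = (\<Sum>t\<in>Sn n. \<Sum>x\<in>Sn n. a x * (b (inv x \<circ> t) * c (inv t \<circ> w)))"
      using w by (simp add: alg_mult_eq_convolution sum_distrib_right mult.assoc)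
    also have "\<dots> = (\<Sum>x\<in>Sn n. a x * (\<Sum>t\<in>Sn n. b (inv x \<circ> t) * c (inv t \<circ> w)))"
      by (subst sum.swap) (simp add: sum_distrib_left)
    also have "\<dots> = alg_mult n a (alg_mult n b c) w"
      using w shift by (simp add: alg_mult_eq_convolution)
    finally show ?thesis .
  qed
qed

lemma principal_right_ideal_mono:
  assumes "x = alg_mult n y c"
  shows "{alg_mult n x a | a. a \<in> grp_alg n} \<subseteq> {alg_mult n y a | a. a \<in> grp_alg n}"
  using assms alg_mult_in_grp_alg by (auto simp: alg_mult_assoc)

section \<open>Permutations increasing on blocks\<close>

definition block_increasing :: "nat \<Rightarrow> (nat \<Rightarrow> nat) \<Rightarrow> perm \<Rightarrow> bool" where
  "block_increasing n g w \<longleftrightarrow> (\<forall>i j. 1 \<le> i \<longrightarrow> i < j \<longrightarrow> j \<le> n \<longrightarrow> g i = g j \<longrightarrow> w i < w j)"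

definition B_blocks :: "nat \<Rightarrow> (nat \<Rightarrow> nat) \<Rightarrow> perm \<Rightarrow> 'k::comm_ring_1" where
  "B_blocks n g = (\<lambda>w. if w \<in> Sn n \<and> block_increasing n g w then 1 else 0)"

definition inversions :: "nat \<Rightarrow> perm \<Rightarrow> nat" where
  "inversions n w = card {(i, j). 1 \<le> i \<and> i < j \<and> j \<le> n \<and> w j < w i}"

lemma block_increasingD:
  "block_increasing n g w \<Longrightarrow> 1 \<le> i \<Longrightarrow> i < j \<Longrightarrow> j \<le> n \<Longrightarrow> g i = g j \<Longrightarrow> w i < w j"
  unfolding block_increasing_def by blast

lemma ex_adjacent_non_ascent:
  fixes u :: "nat \<Rightarrow> 'a::linorder"
  shows "i < j \<Longrightarrow> \<not> u i < u j \<Longrightarrow> \<exists>k. i \<le> k \<and> k < j \<and> \<not> u k < u (Suc k)"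
proof (induction j)
  case 0
  then show ?case by simp
next
  case (Suc j)
  show ?case
  proof (cases "i < j \<and> \<not> u i < u j")
    case True
    with Suc.IH show ?thesis by (meson less_SucI)
  next
    case False
    with Suc.prems have "i \<le> j" "\<not> u j < u (Suc j)"
      by (cases "i = j"; auto dest: less_trans)+
    then show ?thesis by auto
  qed
qed

lemma not_block_increasing_adjacent:
  assumes g: "mono_on {1..n} g" and u: "u \<in> Sn n" and "\<not> block_increasing n g u"
  obtains k where "1 \<le> k" "Suc k \<le> n" "g k = g (Suc k)" "u (Suc k) < u k"
proof -
  obtain i j where ij: "1 \<le> i" "i < j" "j \<le> n" "g i = g j" "\<not> u i < u j"
    using assms(3) unfolding block_increasing_def by blast
  then obtain k where k: "i \<le> k" "k < j" "\<not> u k < u (Suc k)"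
    using ex_adjacent_non_ascent by blast
  have "u k \<noteq> u (Suc k)" using inj_eq[OF Sn_inj[OF u]] by simp
  with k have "u (Suc k) < u k" by simp
  moreover have "g i \<le> g k" "g k \<le> g (Suc k)" "g (Suc k) \<le> g j"
    using ij(1,3) k(1,2) by (simp_all add: mono_onD[OF g])
  with ij(4) have "g k = g (Suc k)" by simp
  moreover have "1 \<le> k" "Suc k \<le> n" using ij k by simp_all
  ultimately show ?thesis using that by blast
qed

lemma block_increasing_comp_iff:
  assumes u: "u \<in> Sn n" "block_increasing n g u" and z: "z \<in> Sn n"
    and blocks: "\<And>x y. x \<in> {1..n} \<Longrightarrow> y \<in> {1..n} \<Longrightarrow> h x = h y \<Longrightarrow> g (z x) = g (z y)"
  shows "block_increasing n h (u \<circ> z) \<longleftrightarrow> block_increasing n h z"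
proof -
  have "u (z x) < u (z y) \<longleftrightarrow> z x < z y"
    if "1 \<le> x" "x < y" "y \<le> n" "h x = h y" for x y
  proof -
    have zxy: "z x \<in> {1..n}" "z y \<in> {1..n}" "g (z x) = g (z y)"
      using that Sn_in_range[OF z] blocks by auto
    have "z x \<noteq> z y" using that Sn_inj[OF z] by (auto dest: injD)
    then consider "z x < z y" | "z y < z x" by linarith
    then show ?thesis
    proof cases
      case 1
      then show ?thesis using zxy by (auto intro: block_increasingD[OF u(2)])
    next
      case 2
      then have "u (z y) < u (z x)" using zxy by (auto intro: block_increasingD[OF u(2)])
      then show ?thesis using 2 by simp
    qed
  qed
  then show ?thesis unfolding block_increasing_def by auto
qed

lemma inversions_transpose_less:
  assumes k: "1 \<le> k" "Suc k \<le> n" and descent: "u (Suc k) < u k"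
  shows "inversions n (u \<circ> transpose k (Suc k)) < inversions n u"
proof -
  let ?s = "transpose k (Suc k)"
  define I where "I = {(i, j). 1 \<le> i \<and> i < j \<and> j \<le> n \<and> u j < u i}"
  define I' where "I' = {(i, j). 1 \<le> i \<and> i < j \<and> j \<le> n \<and> u (?s j) < u (?s i)}"
  have fin: "finite I"
    unfolding I_def by (rule finite_subset[of _ "{1..n} \<times> {1..n}"]) auto
  have "inj_on (map_prod ?s ?s) I'"
    by (auto intro!: inj_onI dest: transpose_eq_imp_eq)
  then have "card I' = card (map_prod ?s ?s ` I')" by (simp add: card_image)
  also have "\<dots> \<le> card (I - {(k, Suc k)})"
  proof (rule card_mono)
    show "finite (I - {(k, Suc k)})" using fin by simp
    show "map_prod ?s ?s ` I' \<subseteq> I - {(k, Suc k)}"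
      using k descent by (auto simp: I_def I'_def transpose_def split: if_splits)
  qed
  also have "\<dots> < card I"
    using fin k descent by (intro card_Diff1_less) (auto simp: I_def)
  finally show ?thesis unfolding inversions_def I_def I'_def by simp
qed

lemma block_increasing_factorization:
  assumes g: "mono_on {1..n} g" and w: "w \<in> Sn n"
  obtains u v where "u \<in> Sn n" "v \<in> Sn n" "block_increasing n g u" "g \<circ> v = g" "w = u \<circ> v"
proof -
  \<comment> \<open>Minimise the inversions of \<open>w \<circ> v\<close>; a descent inside a block would be undone by
    an adjacent transposition, which preserves the blocks.\<close>
  define P where "P v \<longleftrightarrow> v \<in> Sn n \<and> g \<circ> v = g" for v
  have "P id" unfolding P_def Sn_def by simp
  then obtain v where "P v" and min: "\<And>v'. P v' \<Longrightarrow> inversions n (w \<circ> v) \<le> inversions n (w \<circ> v')"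
    using ex_has_least_nat[of P id "\<lambda>v. inversions n (w \<circ> v)"] by blast
  then have v: "v \<in> Sn n" "g \<circ> v = g" unfolding P_def by auto
  have "block_increasing n g (w \<circ> v)"
  proof (rule ccontr)
    assume "\<not> block_increasing n g (w \<circ> v)"
    then obtain k where k: "1 \<le> k" "Suc k \<le> n" "g k = g (Suc k)" "(w \<circ> v) (Suc k) < (w \<circ> v) k"
      using not_block_increasing_adjacent[OF g Sn_comp[OF w v(1)]] by blast
    let ?s = "transpose k (Suc k)"
    have "?s \<in> Sn n" unfolding Sn_def using k by (simp add: permutes_swap_id)
    moreover have "g \<circ> ?s = g" using k(3) by (auto simp: fun_eq_iff transpose_def)
    ultimately have "P (v \<circ> ?s)" using v unfolding P_def by (simp add: Sn_comp o_assoc)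
    then have "inversions n (w \<circ> v) \<le> inversions n (w \<circ> v \<circ> ?s)"
      using min by (metis o_assoc)
    moreover have "inversions n (w \<circ> v \<circ> ?s) < inversions n (w \<circ> v)"
      using k by (intro inversions_transpose_less) auto
    ultimately show False by simp
  qed
  moreover have "g \<circ> inv v = g"
    by (metis v o_assoc Sn_inv_o(1)[OF v(1)] comp_id)
  moreover have "w = (w \<circ> v) \<circ> inv v" by (simp add: comp_assoc Sn_inv_o[OF v(1)])
  ultimately show ?thesis using that Sn_comp[OF w v(1)] Sn_inv[OF v(1)] by blast
qed

lemma block_increasing_block_preserving_eq_id:
  assumes t: "t \<in> Sn n" and pres: "g \<circ> t = g" and incr: "block_increasing n g t"
  shows "t = id"
proof (rule ccontr)
  assume "t \<noteq> id"
  then have "\<exists>i. t i \<noteq> i" by auto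
  define i where "i = (LEAST i. t i \<noteq> i)"
  have ti: "t i \<noteq> i" unfolding i_def by (rule LeastI_ex) fact
  have below: "t j = j" if "j < i" for j using not_less_Least that unfolding i_def by blast
  have inj: "t x = t y \<longleftrightarrow> x = y" for x y using inj_eq[OF Sn_inj[OF t]] .
  have "\<not> t i < i" using below[of "t i"] inj ti by metis
  with ti have i_less: "i < t i" by simp
  define k where "k = inv t i"
  have tk: "t k = i" unfolding k_def by (rule Sn_apply_inv[OF t])
  with ti inj have "k \<noteq> i" by auto
  with below tk have "i < k" by (metis linorder_neqE_nat)
  have "i \<in> {1..n}" using Sn_fixes[OF t] ti by blast
  moreover have "k \<in> {1..n}" using Sn_fixes[OF t, of k] tk \<open>k \<noteq> i\<close> by metis
  moreover have "g i = g k" using fun_cong[OF pres, of k] tk by simp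
  ultimately have "t i < t k" using \<open>i < k\<close> by (intro block_increasingD[OF incr]) auto
  with tk i_less show False by simp
qed

lemma block_increasing_factor_unique:
  assumes u: "u \<in> Sn n" "block_increasing n g u" and u': "u' \<in> Sn n" "block_increasing n g u'"
    and z: "z \<in> Sn n" and z': "z' \<in> Sn n" and blocks: "g \<circ> z = g \<circ> z'" and eq: "u \<circ> z = u' \<circ> z'"
  shows "u = u' \<and> z = z'"
proof -
  define t where "t = z' \<circ> inv z"
  have t: "t \<in> Sn n" unfolding t_def using z z' by (simp add: Sn_comp Sn_inv)
  have pres: "g \<circ> t = g"
    unfolding t_def by (metis blocks o_assoc Sn_inv_o(1)[OF z] comp_id)
  have "u = u' \<circ> t"
    unfolding t_def by (metis eq o_assoc Sn_inv_o(1)[OF z] comp_id)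
  moreover have "block_increasing n g (u' \<circ> t) \<longleftrightarrow> block_increasing n g t"
    using pres by (intro block_increasing_comp_iff[OF u' t]) (metis comp_apply)
  ultimately have "t = id"
    using u(2) by (intro block_increasing_block_preserving_eq_id[OF t pres]) simp
  with \<open>u = u' \<circ> t\<close> have "u = u'" by simp
  with eq have "u \<circ> z = u \<circ> z'" by simp
  then have "z = z'" by (simp add: fun_eq_iff inj_eq[OF Sn_inj[OF u(1)]])
  with \<open>u = u'\<close> show ?thesis ..
qed

lemma block_increasing_factor_through:
  assumes g: "mono_on {1..n} g" and q: "q \<in> Sn n"
    and q_blocks: "\<And>x y. x \<in> {1..n} \<Longrightarrow> y \<in> {1..n} \<Longrightarrow> h x = h y \<Longrightarrow> g (q x) = g (q y)"
    and w: "w \<in> Sn n" "block_increasing n h w"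
  obtains u z where "u \<in> Sn n" "block_increasing n g u" "z \<in> Sn n" "block_increasing n h z"
    "g \<circ> z = g \<circ> q" "w = u \<circ> z"
proof -
  obtain u v where u: "u \<in> Sn n" "block_increasing n g u" and v: "v \<in> Sn n" "g \<circ> v = g"
    and uv: "w \<circ> inv q = u \<circ> v"
    using block_increasing_factorization[OF g Sn_comp[OF w(1) Sn_inv[OF q]]] by metis
  have z: "v \<circ> q \<in> Sn n" "g \<circ> (v \<circ> q) = g \<circ> q"
    using v q by (simp_all add: Sn_comp o_assoc)
  have w_eq: "w = u \<circ> (v \<circ> q)"
    by (metis uv o_assoc Sn_inv_o(2)[OF q] comp_id)
  have "block_increasing n h (u \<circ> (v \<circ> q)) \<longleftrightarrow> block_increasing n h (v \<circ> q)"
    using z(2) q_blocks by (intro block_increasing_comp_iff[OF u z(1)]) (metis comp_apply)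
  with w(2) w_eq have "block_increasing n h (v \<circ> q)" by simp
  with that u z w_eq show ?thesis by blast
qed

lemma B_blocks_eq_alg_mult:
  assumes g: "mono_on {1..n} g" and q: "q \<in> Sn n"
    and q_blocks: "\<And>x y. x \<in> {1..n} \<Longrightarrow> y \<in> {1..n} \<Longrightarrow> h x = h y \<Longrightarrow> g (q x) = g (q y)"
  shows "(B_blocks n h :: perm \<Rightarrow> 'k::comm_ring_1)
    = alg_mult n (B_blocks n g) (\<lambda>z. if z \<in> Sn n \<and> block_increasing n h z \<and> g \<circ> z = g \<circ> q then 1 else 0)"
proof
  fix w
  define T where "T = {(u, z). u \<in> Sn n \<and> z \<in> Sn n \<and> block_increasing n g u
    \<and> block_increasing n h z \<and> g \<circ> z = g \<circ> q \<and> u \<circ> z = w}"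
  have blocks: "g (z x) = g (z y)"
    if "g \<circ> z = g \<circ> q" "x \<in> {1..n}" "y \<in> {1..n}" "h x = h y" for z x y
    using that q_blocks by (metis comp_apply)
  have "card T = (if w \<in> Sn n \<and> block_increasing n h w then 1 else 0)"
  proof (cases "w \<in> Sn n \<and> block_increasing n h w")
    case True
    obtain u z where u: "u \<in> Sn n" "block_increasing n g u" and z: "z \<in> Sn n"
      "block_increasing n h z" "g \<circ> z = g \<circ> q" and w: "w = u \<circ> z"
      by (rule block_increasing_factor_through[of n g q h w]) (use g q q_blocks True in blast)+
    have "T = {(u, z)}"
    proof (intro set_eqI iffI)
      fix p assume "p \<in> T"
      then obtain u' z' where p: "p = (u', z')" and u': "u' \<in> Sn n" "block_increasing n g u'"
        and z': "z' \<in> Sn n" "g \<circ> z' = g \<circ> q" and "u' \<circ> z' = w"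
        unfolding T_def by blast
      with z w have "u = u' \<and> z = z'"
        by (intro block_increasing_factor_unique[OF u u' z(1) z'(1)]) simp_all
      with p show "p \<in> {(u, z)}" by simp
    qed (use u z w in \<open>simp add: T_def\<close>)
    with True show ?thesis by simp
  next
    case False
    have "T = {}"
    proof (intro equals0I)
      fix p assume "p \<in> T"
      then obtain u z where "u \<in> Sn n" "block_increasing n g u" "z \<in> Sn n"
        "block_increasing n h z" "g \<circ> z = g \<circ> q" "u \<circ> z = w"
        unfolding T_def by blast
      with False blocks show False
        using block_increasing_comp_iff[of u n g z h] Sn_comp by metis
    qed
    with False show ?thesis by simp
  qed
  then show "B_blocks n h w = alg_mult n (B_blocks n g)
      (\<lambda>z. if z \<in> Sn n \<and> block_increasing n h z \<and> g \<circ> z = g \<circ> q then 1 else 0) w"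
    unfolding B_blocks_def alg_mult_indicators T_def by (simp add: conj_ac)
qed

section \<open>Blocks of a composition\<close>

definition partial_sum :: "nat list \<Rightarrow> nat \<Rightarrow> nat" where
  "partial_sum \<alpha> k = sum_list (take k \<alpha>)"

text \<open>Positions are numbered from 1 and blocks from 0: position \<open>x\<close> lies in block \<open>b\<close> of \<open>\<alpha>\<close>
  iff \<open>partial_sum \<alpha> b < x \<le> partial_sum \<alpha> (Suc b)\<close>.\<close>

definition block_of :: "nat list \<Rightarrow> nat \<Rightarrow> nat" where
  "block_of \<alpha> x = (LEAST b. x \<le> partial_sum \<alpha> (Suc b))"

lemma partial_sum_0 [simp]: "partial_sum \<alpha> 0 = 0"
  unfolding partial_sum_def by simp

lemma partial_sum_mono: "k \<le> k' \<Longrightarrow> partial_sum \<alpha> k \<le> partial_sum \<alpha> k'"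
  unfolding partial_sum_def by (metis le_add1 le_Suc_ex sum_list_append take_add)

lemma partial_sum_all: "length \<alpha> \<le> k \<Longrightarrow> partial_sum \<alpha> k = sum_list \<alpha>"
  unfolding partial_sum_def by simp

lemma partial_sum_Suc: "b < length \<alpha> \<Longrightarrow> partial_sum \<alpha> (Suc b) = partial_sum \<alpha> b + \<alpha> ! b"
  unfolding partial_sum_def by (simp add: take_Suc_conv_app_nth)

lemma block_of_bounds:
  assumes x: "x \<in> {1..sum_list \<alpha>}"
  shows "block_of \<alpha> x < length \<alpha>" and "partial_sum \<alpha> (block_of \<alpha> x) < x"
    and "x \<le> partial_sum \<alpha> (Suc (block_of \<alpha> x))"
proof -
  have ex: "x \<le> partial_sum \<alpha> (Suc (length \<alpha> - 1))"
    using x partial_sum_all[of \<alpha> "Suc (length \<alpha> - 1)"] by simp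
  show "x \<le> partial_sum \<alpha> (Suc (block_of \<alpha> x))"
    unfolding block_of_def by (rule LeastI) (rule ex)
  have "block_of \<alpha> x \<le> length \<alpha> - 1"
    unfolding block_of_def by (rule Least_le) (rule ex)
  moreover have "\<alpha> \<noteq> []" using x by auto
  ultimately show "block_of \<alpha> x < length \<alpha>" by (cases \<alpha>) auto
  show "partial_sum \<alpha> (block_of \<alpha> x) < x"
  proof (cases "block_of \<alpha> x")
    case 0
    then show ?thesis using x by simp
  next
    case (Suc b)
    then have "\<not> x \<le> partial_sum \<alpha> (Suc b)"
      unfolding block_of_def by (metis lessI not_less_Least)
    with Suc show ?thesis by simp
  qed
qed

lemma block_of_eqI:
  assumes "partial_sum \<alpha> b < x" "x \<le> partial_sum \<alpha> (Suc b)"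
  shows "block_of \<alpha> x = b"
proof (rule antisym)
  show "block_of \<alpha> x \<le> b"
    unfolding block_of_def by (rule Least_le) (rule assms(2))
  have "x \<le> partial_sum \<alpha> (Suc (block_of \<alpha> x))"
    unfolding block_of_def by (rule LeastI) (rule assms(2))
  with assms(1) have "\<not> Suc (block_of \<alpha> x) \<le> b"
    using partial_sum_mono[of "Suc (block_of \<alpha> x)" b \<alpha>] by linarith
  then show "b \<le> block_of \<alpha> x" by simp
qed

lemma mono_on_block_of: "mono_on {1..sum_list \<alpha>} (block_of \<alpha>)"
proof (rule mono_onI)
  fix x y assume "x \<in> {1..sum_list \<alpha>}" "y \<in> {1..sum_list \<alpha>}" "x \<le> y"
  with block_of_bounds(3)[of y \<alpha>] have "x \<le> partial_sum \<alpha> (Suc (block_of \<alpha> y))" by simp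
  then show "block_of \<alpha> x \<le> block_of \<alpha> y"
    unfolding block_of_def by (rule Least_le)
qed

lemma comp_Set_iff_block_of:
  assumes i: "1 \<le> i" "i < sum_list \<alpha>"
  shows "i \<in> comp_Set \<alpha> \<longleftrightarrow> block_of \<alpha> i \<noteq> block_of \<alpha> (Suc i)"
proof
  assume "i \<in> comp_Set \<alpha>"
  then obtain k where k: "i = partial_sum \<alpha> k" "1 \<le> k" "k < length \<alpha>"
    unfolding comp_Set_def partial_sum_def by auto
  have "block_of \<alpha> i \<le> k - 1"
    unfolding block_of_def by (rule Least_le) (use k in simp)
  moreover have "\<not> Suc (block_of \<alpha> (Suc i)) \<le> k"
  proof
    assume "Suc (block_of \<alpha> (Suc i)) \<le> k"
    then have "partial_sum \<alpha> (Suc (block_of \<alpha> (Suc i))) \<le> i"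
      unfolding k(1) by (rule partial_sum_mono)
    with block_of_bounds(3)[of "Suc i" \<alpha>] i show False by simp
  qed
  ultimately show "block_of \<alpha> i \<noteq> block_of \<alpha> (Suc i)" using k(2) by linarith
next
  assume ne: "block_of \<alpha> i \<noteq> block_of \<alpha> (Suc i)"
  define k where "k = Suc (block_of \<alpha> i)"
  have "block_of \<alpha> i \<le> block_of \<alpha> (Suc i)"
    using i by (intro mono_onD[OF mono_on_block_of]) auto
  with ne have "partial_sum \<alpha> k \<le> partial_sum \<alpha> (block_of \<alpha> (Suc i))"
    unfolding k_def by (intro partial_sum_mono) simp
  moreover have "i \<le> partial_sum \<alpha> k" "partial_sum \<alpha> (block_of \<alpha> (Suc i)) < Suc i"
    using i block_of_bounds(2,3) unfolding k_def by auto
  ultimately have ik: "i = partial_sum \<alpha> k" by simp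
  moreover have "k < length \<alpha>"
    using ik i partial_sum_all[of \<alpha> k] by (metis not_less order_less_irrefl)
  moreover have "1 \<le> k" unfolding k_def by simp
  ultimately show "i \<in> comp_Set \<alpha>" unfolding comp_Set_def partial_sum_def by auto
qed

lemma Des_subset_comp_Set_iff:
  assumes n: "sum_list \<alpha> = n" and w: "w \<in> Sn n"
  shows "Des n w \<subseteq> comp_Set \<alpha> \<longleftrightarrow> block_increasing n (block_of \<alpha>) w"
proof
  assume des: "Des n w \<subseteq> comp_Set \<alpha>"
  show "block_increasing n (block_of \<alpha>) w"
  proof (rule ccontr)
    assume "\<not> block_increasing n (block_of \<alpha>) w"
    then obtain k where k: "1 \<le> k" "Suc k \<le> n" "block_of \<alpha> k = block_of \<alpha> (Suc k)" "w (Suc k) < w k"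
      using not_block_increasing_adjacent[OF mono_on_block_of[of \<alpha>, unfolded n] w] by blast
    then have "k \<in> comp_Set \<alpha>" using des unfolding Des_def by auto
    with k n show False using comp_Set_iff_block_of[of k \<alpha>] by simp
  qed
next
  assume incr: "block_increasing n (block_of \<alpha>) w"
  show "Des n w \<subseteq> comp_Set \<alpha>"
  proof
    fix i assume "i \<in> Des n w"
    then have i: "1 \<le> i" "Suc i \<le> n" "w (Suc i) < w i" unfolding Des_def by auto
    then have "block_of \<alpha> i \<noteq> block_of \<alpha> (Suc i)"
      using block_increasingD[OF incr i(1) lessI i(2)] by auto
    with i n show "i \<in> comp_Set \<alpha>" using comp_Set_iff_block_of by simp
  qed
qed

lemma B_comp_eq_B_blocks: "sum_list \<alpha> = n \<Longrightarrow> B_comp n \<alpha> = B_blocks n (block_of \<alpha>)"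
  unfolding B_comp_def BI_def B_blocks_def by (auto simp: Des_subset_comp_Set_iff fun_eq_iff)

section \<open>Merging the blocks of one composition into those of another\<close>

lemma sum_add_le_sum_superset:
  fixes f :: "'a \<Rightarrow> nat"
  assumes "finite B" "insert b A \<subseteq> B" "b \<notin> A"
  shows "sum f A + f b \<le> sum f B"
proof -
  have "finite A" by (rule finite_subset[of A B]) (use assms in auto)
  with assms(3) have "sum f A + f b = sum f (insert b A)" by simp
  also have "\<dots> \<le> sum f B" using assms(1,2) by (rule sum_mono2) simp
  finally show ?thesis .
qed

locale block_merge =
  fixes \<beta> \<gamma> :: "nat list" and c :: "nat \<Rightarrow> nat"
  assumes c_less: "b < length \<beta> \<Longrightarrow> c b < length \<gamma>"
    and nth_\<gamma>: "j < length \<gamma> \<Longrightarrow> \<gamma> ! j = (\<Sum>b | b < length \<beta> \<and> c b = j. \<beta> ! b)"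
begin

lemma sum_list_\<gamma>: "sum_list \<gamma> = sum_list \<beta>"
proof -
  have "sum_list \<gamma> = (\<Sum>j<length \<gamma>. \<Sum>b | b \<in> {..<length \<beta>} \<and> c b = j. \<beta> ! b)"
    by (simp add: sum_list_sum_nth atLeast0LessThan nth_\<gamma>)
  also have "\<dots> = (\<Sum>b<length \<beta>. \<beta> ! b)"
    by (rule sum.group) (auto simp: c_less)
  also have "\<dots> = sum_list \<beta>"
    by (simp add: sum_list_sum_nth atLeast0LessThan)
  finally show ?thesis .
qed

definition offset :: "nat \<Rightarrow> nat" where
  "offset b = (\<Sum>b' | b' < b \<and> c b' = c b. \<beta> ! b')"

text \<open>Block \<open>b\<close> of \<open>\<beta>\<close> is moved, in order, into block \<open>c b\<close> of \<open>\<gamma>\<close>, right after the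
  positions taken by the blocks \<open>b' < b\<close> with \<open>c b' = c b\<close>.\<close>

definition merge_perm :: perm where
  "merge_perm x = (if x \<in> {1..sum_list \<beta>}
     then partial_sum \<gamma> (c (block_of \<beta> x)) + offset (block_of \<beta> x) + (x - partial_sum \<beta> (block_of \<beta> x))
     else x)"

lemma offset_add_le: "b < length \<beta> \<Longrightarrow> offset b + \<beta> ! b \<le> \<gamma> ! c b"
  unfolding offset_def nth_\<gamma>[OF c_less] by (rule sum_add_le_sum_superset) auto

lemma offset_add_le_offset: "b < b' \<Longrightarrow> c b = c b' \<Longrightarrow> offset b + \<beta> ! b \<le> offset b'"
  unfolding offset_def by (rule sum_add_le_sum_superset) auto

lemma merge_perm_bounds:
  assumes x: "x \<in> {1..sum_list \<beta>}"
  defines "b \<equiv> block_of \<beta> x"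
  shows "partial_sum \<gamma> (c b) + offset b < merge_perm x"
    and "merge_perm x \<le> partial_sum \<gamma> (c b) + offset b + \<beta> ! b"
    and "merge_perm x \<le> partial_sum \<gamma> (Suc (c b))"
proof -
  have b: "b < length \<beta>" "partial_sum \<beta> b < x" "x \<le> partial_sum \<beta> b + \<beta> ! b"
    using block_of_bounds[OF x] partial_sum_Suc unfolding b_def by auto
  have eq: "merge_perm x = partial_sum \<gamma> (c b) + offset b + (x - partial_sum \<beta> b)"
    using x unfolding merge_perm_def b_def by simp
  show "partial_sum \<gamma> (c b) + offset b < merge_perm x"
    using eq b by simp
  show "merge_perm x \<le> partial_sum \<gamma> (c b) + offset b + \<beta> ! b"
    using eq b by simp
  also have "\<dots> \<le> partial_sum \<gamma> (Suc (c b))"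
    using offset_add_le[OF b(1)] partial_sum_Suc[OF c_less[OF b(1)]] by simp
  finally show "merge_perm x \<le> partial_sum \<gamma> (Suc (c b))" .
qed

lemma block_of_merge_perm:
  assumes x: "x \<in> {1..sum_list \<beta>}"
  shows "block_of \<gamma> (merge_perm x) = c (block_of \<beta> x)"
proof (rule block_of_eqI)
  show "partial_sum \<gamma> (c (block_of \<beta> x)) < merge_perm x"
    using merge_perm_bounds(1)[OF x] by linarith
  show "merge_perm x \<le> partial_sum \<gamma> (Suc (c (block_of \<beta> x)))"
    by (rule merge_perm_bounds(3)[OF x])
qed

lemma merge_perm_in_range:
  assumes x: "x \<in> {1..sum_list \<beta>}"
  shows "merge_perm x \<in> {1..sum_list \<beta>}"
proof -
  have "c (block_of \<beta> x) < length \<gamma>" using c_less block_of_bounds(1)[OF x] .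
  then have "partial_sum \<gamma> (Suc (c (block_of \<beta> x))) \<le> sum_list \<gamma>"
    using partial_sum_mono[of _ "length \<gamma>" \<gamma>] partial_sum_all[of \<gamma> "length \<gamma>"] by simp
  with merge_perm_bounds[OF x] show ?thesis by (simp add: sum_list_\<gamma>)
qed

lemma merge_perm_less:
  assumes x: "x \<in> {1..sum_list \<beta>}" and y: "y \<in> {1..sum_list \<beta>}"
    and less: "block_of \<beta> x < block_of \<beta> y" and same: "c (block_of \<beta> x) = c (block_of \<beta> y)"
  shows "merge_perm x < merge_perm y"
proof -
  have "merge_perm x \<le> partial_sum \<gamma> (c (block_of \<beta> y)) + offset (block_of \<beta> x) + \<beta> ! block_of \<beta> x"
    using merge_perm_bounds(2)[OF x] same by simp
  also have "\<dots> \<le> partial_sum \<gamma> (c (block_of \<beta> y)) + offset (block_of \<beta> y)"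
    using offset_add_le_offset[OF less same] by simp
  also have "\<dots> < merge_perm y"
    using merge_perm_bounds(1)[OF y] .
  finally show ?thesis .
qed

lemma inj_on_merge_perm: "inj_on merge_perm {1..sum_list \<beta>}"
proof
  fix x y assume x: "x \<in> {1..sum_list \<beta>}" and y: "y \<in> {1..sum_list \<beta>}"
    and eq: "merge_perm x = merge_perm y"
  have "c (block_of \<beta> x) = c (block_of \<beta> y)"
    using block_of_merge_perm[OF x] block_of_merge_perm[OF y] eq by simp
  with x y eq have "block_of \<beta> x = block_of \<beta> y"
    using merge_perm_less[OF x y] merge_perm_less[OF y x] by (metis less_irrefl linorder_neqE_nat)
  with eq x y block_of_bounds(2)[OF x] block_of_bounds(2)[OF y] show "x = y"
    unfolding merge_perm_def by simp
qed

lemma merge_perm_in_Sn: "merge_perm \<in> Sn (sum_list \<beta>)"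
proof -
  have "merge_perm permutes {1..sum_list \<beta>}"
  proof (rule inj_imp_permutes)
    show "merge_perm x = x" if "x \<notin> {1..sum_list \<beta>}" for x
      using that unfolding merge_perm_def by (simp only: if_False)
  qed (rule inj_on_merge_perm merge_perm_in_range | simp)+
  then show ?thesis unfolding Sn_def by simp
qed

end

lemma part_le_mset_cong:
  assumes lam: "mset lam' = mset lam" and mu: "mset mu' = mset mu" and le: "part_le lam mu"
  shows "part_le lam' mu'"
proof -
  obtain f where f_less: "\<And>i. i < length lam \<Longrightarrow> f i < length mu"
    and mu_nth: "\<And>j. j < length mu \<Longrightarrow> mu ! j = (\<Sum>i | i < length lam \<and> f i = j. lam ! i)"
    using le unfolding part_le_def by blast
  obtain \<sigma> where \<sigma>: "\<sigma> permutes {..<length lam'}" and lam_eq: "permute_list \<sigma> lam' = lam"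
    using mset_eq_permutation[OF lam[symmetric]] .
  obtain \<rho> where \<rho>: "\<rho> permutes {..<length mu'}" and mu_eq: "permute_list \<rho> mu' = mu"
    using mset_eq_permutation[OF mu[symmetric]] .
  have len: "length lam = length lam'" "length mu = length mu'"
    using lam_eq mu_eq by auto
  define f' where "f' i = \<rho> (f (inv \<sigma> i))" for i
  have "f' i < length mu'" if "i < length lam'" for i
    using that f_less len permutes_in_image[OF \<rho>] permutes_in_image[OF permutes_inv[OF \<sigma>]]
    unfolding f'_def by simp
  moreover have "mu' ! j = (\<Sum>i | i < length lam' \<and> f' i = j. lam' ! i)" if j: "j < length mu'" for j
  proof -
    have j': "inv \<rho> j < length mu" "\<rho> (inv \<rho> j) = j"
      using j len permutes_in_image[OF permutes_inv[OF \<rho>]] permutes_inverses(1)[OF \<rho>] by auto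
    have "mu' ! j = mu ! inv \<rho> j"
      using j' mu_eq permute_list_nth[OF \<rho>] len by auto
    also have "\<dots> = (\<Sum>i | i < length lam \<and> f i = inv \<rho> j. lam' ! \<sigma> i)"
      using mu_nth[OF j'(1)] lam_eq permute_list_nth[OF \<sigma>] len by simp
    also have "\<dots> = (\<Sum>i | i < length lam' \<and> f' i = j. lam' ! i)"
    proof (rule sum.reindex_bij_witness[of _ "inv \<sigma>" \<sigma>])
      show "\<sigma> i \<in> {i. i < length lam' \<and> f' i = j}" if "i \<in> {i. i < length lam \<and> f i = inv \<rho> j}" for i
        using that j' len permutes_in_image[OF \<sigma>] unfolding f'_def
        by (simp add: permutes_inverses(2)[OF \<sigma>])
      show "inv \<sigma> i \<in> {i. i < length lam \<and> f i = inv \<rho> j}" if "i \<in> {i. i < length lam' \<and> f' i = j}" for i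
        using that len permutes_in_image[OF permutes_inv[OF \<sigma>]] permutes_inverses(2)[OF \<rho>]
        unfolding f'_def by auto
    qed (simp_all add: permutes_inverses[OF \<sigma>])
    finally show ?thesis .
  qed
  ultimately show ?thesis unfolding part_le_def by blast
qed

theorem proposition2p6:
  fixes n :: nat and \<beta> \<gamma> :: "nat list"
  assumes "is_comp n \<beta>" and "is_comp n \<gamma>"
    and "part_le (und_part \<beta>) (und_part \<gamma>)"
  shows "(R_comp n \<beta> :: (perm \<Rightarrow> 'k::comm_ring_1) set) \<subseteq> R_comp n \<gamma>"
proof -
  have n: "sum_list \<beta> = n" "sum_list \<gamma> = n"
    using assms(1,2) unfolding is_comp_def by auto
  have "part_le \<beta> \<gamma>"
    using part_le_mset_cong[OF _ _ assms(3)] by (simp add: und_part_def)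
  then obtain c where "block_merge \<beta> \<gamma> c"
    unfolding part_le_def block_merge_def by blast
  then interpret block_merge \<beta> \<gamma> c .
  have "(B_comp n \<beta> :: perm \<Rightarrow> 'k) = alg_mult n (B_comp n \<gamma>) (\<lambda>z. if z \<in> Sn n
      \<and> block_increasing n (block_of \<beta>) z \<and> block_of \<gamma> \<circ> z = block_of \<gamma> \<circ> merge_perm then 1 else 0)"
    unfolding B_comp_eq_B_blocks[OF n(1)] B_comp_eq_B_blocks[OF n(2)]
  proof (rule B_blocks_eq_alg_mult)
    show "mono_on {1..n} (block_of \<gamma>)" using mono_on_block_of[of \<gamma>] n by simp
    show "merge_perm \<in> Sn n" using merge_perm_in_Sn n by simp
    show "block_of \<gamma> (merge_perm x) = block_of \<gamma> (merge_perm y)"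
      if "x \<in> {1..n}" "y \<in> {1..n}" "block_of \<beta> x = block_of \<beta> y" for x y
      using that block_of_merge_perm n by simp
  qed
  then show ?thesis
    unfolding R_comp_def by (rule principal_right_ideal_mono)
qed

end
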